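(* For every probability vector $p=(p_1,\dots,p_I)\in\mathbb R^I$ with all entries positive, the system-wide safety staffing parameter $\vartheta_p$ is given, for every $i\in\mathcal I$, by $$\vartheta_p=\frac{\sum_{j\in\mathcal J}\mathfrak d(i,j)\,\theta_j-\sum_{\ell\in\mathcal I}\mathfrak d(i,\ell)\,\hat\lambda_\ell}{\sum_{\ell\in\mathcal I}\mathfrak d(i,\ell)\,p_\ell}.$$ (In particular the right-hand side does not depend on $i$.)
   Context: Network and parameters: $\mathcal I=\{1,\dots,I\}$ (customer classes), $\mathcal J=\{1,\dots,J\}$ (server pools), and $\mathcal E\subset\mathcal I\times\mathcal J$ is a set of edges such that the bipartite graph $\mathcal G=(\mathcal I\cup\mathcal J,\mathcal E)$ is a tree. Write $i\sim j$ iff $(i,j)\in\mathcal E$, $\mathcal J(i)=\{j:i\sim j\}$, $\mathcal I(j)=\{i:i\sim j\}$. $\mathbb R^{\mathcal G}$ denotes the arrays $[\xi_{ij}]\in\mathbb R^{I\times J}$ with $\xi_{ij}=0$ whenever $i\not\sim j$, and $\mathbb R^{\mathcal G}_+$ its elements with nonnegative entries. For each $n\in\mathbb N$ there are arrival rates $\lambda^n_i>0$, service rates $\mu^n_{ij}>0$ ($i\sim j$) and pool sizes $N^n_j\in\mathbb N$, such that as $n\to\infty$: $\lambda^n_i/n\to\lambda_i>0$, $N^n_j/n\to\nu_j>0$, $\mu^n_{ij}\to\mu_{ij}>0$, $\hat\lambda^n_i:=(\lambda^n_i-n\lambda_i)/\sqrt n\to\hat\lambda_i\in\mathbb R$, $\hat\mu^n_{ij}:=\sqrt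 n(\mu^n_{ij}-\mu_{ij})\to\hat\mu_{ij}\in\mathbb R$, $\hat\nu^n_j:=\sqrt n(N^n_j/n-\nu_j)\to\hat\nu_j\in\mathbb R$. Complete resource pooling is assumed: the linear program "minimize $\max_{j}\sum_i\xi_{ij}$ over $\xi\in\mathbb R^{\mathcal G}_+$ subject to $\sum_j\mu_{ij}\nu_j\xi_{ij}=\lambda_i$ for all $i$" has a unique solution $\xi^*$, and it satisfies $\sum_{i}\xi^*_{ij}=1$ for all $j$ and $\xi^*_{ij}>0$ for all $i\sim j$. Put $z^*_{ij}:=\xi^*_{ij}\nu_j$ and $\theta_j:=\hat\nu_j+\sum_{i\in\mathcal I(j)}(\hat\mu_{ij}/\mu_{ij})z^*_{ij}$. SWSS parameter: for a probability vector $p\in\mathbb R^I$ with positive entries, $\vartheta_p$ is the (unique) optimal value of the linear program: maximize $\vartheta$ over $(\vartheta,\kappa)\in\mathbb R\times\mathbb R^{\mathcal G}$ subject to $\hat\lambda_i\le\sum_{j\in\mathcal J(i)}\mu_{ij}\kappa_{ij}-\vartheta p_i$ for all $i\in\mathcal I$ and $\sum_{i\in\mathcal I(j)}\kappa_{ij}=\theta_j$ for all $j\in\mathcal J$. Gains: for $i\in\mathcal I$, $j\in\mathcal J$, let $(i_1,j_1,i_2,j_2,\dots,i_m,j_m)$ be the unique shortest path in $\mathcal G$ from $i=i_1$ to $j=j_m$, and set $\mathfrak d(i,j):=\mu_{i_1j_1}\prod_{k=1}^{m-1}\mu_{i_{k+1}j_{k+1}}/\mu_{i_{k+1}j_k}$.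 For $i\ne i'$ in $\mathcal I$ with shortest path $(i_1,j_1,\dots,j_{m-1},i_m)$ from $i=i_1$ to $i'=i_m$, set $\mathfrak d(i,i'):=\prod_{k=1}^{m-1}\mu_{i_kj_k}/\mu_{i_{k+1}j_k}$; and $\mathfrak d(i,i):=1$. *)

theory Defs
  imports "HOL-Analysis.Analysis"
begin

text \<open>Vertices of the bipartite graph: Inl i (customer class), Inr j (server pool).
  The edge set is given by a relation E :: 'i => 'j => bool (E i j iff i ~ j).\<close>

fun gadj :: "('i \<Rightarrow> 'j \<Rightarrow> bool) \<Rightarrow> ('i + 'j) \<Rightarrow> ('i + 'j) \<Rightarrow> bool" where
  "gadj E (Inl i) (Inr j) = E i j"
| "gadj E (Inr j) (Inl i) = E i j"
| "gadj E _ _ = False"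

definition is_walk :: "('i \<Rightarrow> 'j \<Rightarrow> bool) \<Rightarrow> ('i + 'j) list \<Rightarrow> ('i + 'j) \<Rightarrow> ('i + 'j) \<Rightarrow> bool" where
  "is_walk E ps u v \<longleftrightarrow> ps \<noteq> [] \<and> hd ps = u \<and> last ps = v \<and>
     (\<forall>k. Suc k < length ps \<longrightarrow> gadj E (ps ! k) (ps ! Suc k))"

definition is_cycle :: "('i \<Rightarrow> 'j \<Rightarrow> bool) \<Rightarrow> ('i + 'j) list \<Rightarrow> bool" where
  "is_cycle E cs \<longleftrightarrow> length cs \<ge> 3 \<and> distinct cs \<and>
     (\<forall>k. Suc k < length cs \<longrightarrow> gadj E (cs ! k) (cs ! Suc k)) \<and> gadj E (last cs) (hd cs)"

definition is_tree :: "('i \<Rightarrow> 'j \<Rightarrow> bool) \<Rightarrow> bool" where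
  "is_tree E \<longleftrightarrow> (\<forall>u v. (gadj E)\<^sup>*\<^sup>* u v) \<and> \<not> (\<exists>cs. is_cycle E cs)"

definition shortest_path :: "('i \<Rightarrow> 'j \<Rightarrow> bool) \<Rightarrow> ('i + 'j) \<Rightarrow> ('i + 'j) \<Rightarrow> ('i + 'j) list" where
  "shortest_path E u v = (THE ps. is_walk E ps u v \<and>
      (\<forall>qs. is_walk E qs u v \<longrightarrow> length ps \<le> length qs))"

fun cls :: "('i + 'j) \<Rightarrow> 'i" where
  "cls (Inl i) = i" | "cls (Inr j) = undefined"

fun pool :: "('i + 'j) \<Rightarrow> 'j" where
  "pool (Inr j) = j" | "pool (Inl i) = undefined"

text \<open>Path (i_1,j_1,...,i_m,j_m) from i to j; i_k = cls (ps!(2(k-1))), j_k = pool (ps!(2k-1)).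
  d(i,j) = mu_{i_1 j_1} * prod_{k=1}^{m-1} mu_{i_{k+1} j_{k+1}} / mu_{i_{k+1} j_k}.\<close>
definition gain_cp :: "('i \<Rightarrow> 'j \<Rightarrow> bool) \<Rightarrow> ('i \<Rightarrow> 'j \<Rightarrow> real) \<Rightarrow> 'i \<Rightarrow> 'j \<Rightarrow> real" where
  "gain_cp E mu i j =
    (let ps = shortest_path E (Inl i) (Inr j);
         m = length ps div 2;
         ic = (\<lambda>k. cls (ps ! (2 * (k - 1))));
         jc = (\<lambda>k. pool (ps ! (2 * k - 1)))
     in mu (ic 1) (jc 1) * (\<Prod>k\<in>{1..m - 1}. mu (ic (k + 1)) (jc (k + 1)) / mu (ic (k + 1)) (jc k)))"

text \<open>Path (i_1,j_1,...,j_{m-1},i_m) from i to i' (i ~= i');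
  d(i,i') = prod_{k=1}^{m-1} mu_{i_k j_k} / mu_{i_{k+1} j_k};  d(i,i) = 1.\<close>
definition gain_cc :: "('i \<Rightarrow> 'j \<Rightarrow> bool) \<Rightarrow> ('i \<Rightarrow> 'j \<Rightarrow> real) \<Rightarrow> 'i \<Rightarrow> 'i \<Rightarrow> real" where
  "gain_cc E mu i i' =
    (if i = i' then 1 else
     (let ps = shortest_path E (Inl i) (Inl i');
          m = (length ps + 1) div 2;
          ic = (\<lambda>k. cls (ps ! (2 * (k - 1))));
          jc = (\<lambda>k. pool (ps ! (2 * k - 1)))
      in (\<Prod>k\<in>{1..m - 1}. mu (ic k) (jc k) / mu (ic (k + 1)) (jc k))))"

definition in_RG :: "('i \<Rightarrow> 'j \<Rightarrow> bool) \<Rightarrow> ('i \<Rightarrow> 'j \<Rightarrow> real) \<Rightarrow> bool" where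
  "in_RG E x \<longleftrightarrow> (\<forall>i j. \<not> E i j \<longrightarrow> x i j = 0)"

definition crp_feasible :: "('i \<Rightarrow> 'j \<Rightarrow> bool) \<Rightarrow> ('i \<Rightarrow> 'j \<Rightarrow> real) \<Rightarrow> ('j \<Rightarrow> real) \<Rightarrow> ('i \<Rightarrow> real)
    \<Rightarrow> ('i::finite \<Rightarrow> 'j::finite \<Rightarrow> real) \<Rightarrow> bool" where
  "crp_feasible E mu nu lam xi \<longleftrightarrow> in_RG E xi \<and> (\<forall>i j. xi i j \<ge> 0) \<and>
     (\<forall>i. (\<Sum>j\<in>UNIV. mu i j * nu j * xi i j) = lam i)"

definition crp_obj :: "('i::finite \<Rightarrow> 'j::finite \<Rightarrow> real) \<Rightarrow> real" where
  "crp_obj xi = Max (range (\<lambda>j. \<Sum>i\<in>UNIV. xi i j))"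

definition crp_optimal :: "('i \<Rightarrow> 'j \<Rightarrow> bool) \<Rightarrow> ('i \<Rightarrow> 'j \<Rightarrow> real) \<Rightarrow> ('j \<Rightarrow> real) \<Rightarrow> ('i \<Rightarrow> real)
    \<Rightarrow> ('i::finite \<Rightarrow> 'j::finite \<Rightarrow> real) \<Rightarrow> bool" where
  "crp_optimal E mu nu lam xi \<longleftrightarrow> crp_feasible E mu nu lam xi \<and>
     (\<forall>xi'. crp_feasible E mu nu lam xi' \<longrightarrow> crp_obj xi \<le> crp_obj xi')"

definition swss_feasible :: "('i \<Rightarrow> 'j \<Rightarrow> bool) \<Rightarrow> ('i \<Rightarrow> 'j \<Rightarrow> real) \<Rightarrow> ('i \<Rightarrow> real) \<Rightarrow> ('j \<Rightarrow> real)
    \<Rightarrow> ('i::finite \<Rightarrow> real) \<Rightarrow> real \<Rightarrow> ('i \<Rightarrow> 'j::finite \<Rightarrow> real) \<Rightarrow> bool" where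
  "swss_feasible E mu lamhat theta p vt kappa \<longleftrightarrow> in_RG E kappa \<and>
     (\<forall>i. lamhat i \<le> (\<Sum>j\<in>{j. E i j}. mu i j * kappa i j) - vt * p i) \<and>
     (\<forall>j. (\<Sum>i\<in>{i. E i j}. kappa i j) = theta j)"

definition swss :: "('i::finite \<Rightarrow> 'j::finite \<Rightarrow> bool) \<Rightarrow> ('i \<Rightarrow> 'j \<Rightarrow> real) \<Rightarrow> ('i \<Rightarrow> real) \<Rightarrow> ('j \<Rightarrow> real)
    \<Rightarrow> ('i \<Rightarrow> real) \<Rightarrow> real" where
  "swss E mu lamhat theta p = (GREATEST vt. \<exists>kappa::'i \<Rightarrow> 'j \<Rightarrow> real. swss_feasible E mu lamhat theta p vt kappa)"

end

theory Submission
  imports Defs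
begin

text \<open>The gains are a potential on the tree: d(i,l) * mu l j = d(i,j) for every edge l ~ j, because the
  shortest path from i to one end of the edge is the shortest path to the other end extended by the
  edge, and the gain products telescope. Multiplying the class constraint of l by d(i,l) > 0 and
  summing, the kappa terms collapse via the pool constraints to sum_j d(i,j) theta_j, which bounds
  vartheta by the stated quotient. The bound is attained: on a connected bipartite graph every balanced
  supply at the classes and demand at the pools is carried by a flow on the edges, and the flow
  routing d(i,l) (lamhat_l + vartheta p_l) to d(i,j) theta_j, rescaled on pool j by 1 / d(i,j),
  is a feasible kappa.
  Only the tree structure and the positivity of mu and p enter; the limit and resource-pooling
  hypotheses merely give the data their meaning.\<close>

lemma gadj_commute: "gadj E x y = gadj E y x"
  by (cases x; cases y) auto

lemma gadj_isl: "gadj E x y \<Longrightarrow> isl y \<longleftrightarrow> \<not> isl x"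
  by (cases x; cases y) auto

lemma is_walk_iff: "is_walk E ps u v \<longleftrightarrow> ps \<noteq> [] \<and> hd ps = u \<and> last ps = v \<and> successively (gadj E) ps"
  by (simp add: is_walk_def successively_conv_nth)

lemma rtranclp_gadj_invariant:
  assumes "(gadj E)\<^sup>*\<^sup>* u v" and "\<And>x y. gadj E x y \<Longrightarrow> f x = f y"
  shows "f u = f v"
  using assms by (induction rule: rtranclp_induct) auto

lemma connected_pool_has_class:
  assumes conn: "\<forall>u v. (gadj E)\<^sup>*\<^sup>* u v"
  shows "\<exists>l. E l j"
proof -
  have "(gadj E)\<^sup>*\<^sup>* (Inr j) (Inl undefined)" using conn by blast
  then obtain x where "gadj E (Inr j) x" by (metis converse_rtranclpE sum.distinct(2))
  then show ?thesis by (cases x) auto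
qed

lemma rtranclp_gadj_imp_walk:
  assumes "(gadj E)\<^sup>*\<^sup>* u v"
  shows "\<exists>ps. is_walk E ps u v"
  using assms
proof (induction rule: rtranclp_induct)
  case base
  have "is_walk E [u] u u" by (simp add: is_walk_iff)
  then show ?case by blast
next
  case (step y z)
  then obtain ps where "is_walk E ps u y" by blast
  with step.hyps(2) have "is_walk E (ps @ [z]) u z"
    by (auto simp: is_walk_iff successively_append_iff)
  then show ?case by blast
qed

lemma is_walk_snoc:
  assumes "is_walk E ps u v" "gadj E v w"
  shows "is_walk E (ps @ [w]) u w"
  using assms by (auto simp: is_walk_iff successively_append_iff)

lemma is_walk_take:
  assumes walk: "is_walk E ps u v" and k: "k < length ps"
  shows "is_walk E (take (Suc k) ps) u (ps ! k)"
proof -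
  have "successively (gadj E) (take (Suc k) ps @ drop (Suc k) ps)"
    using walk by (simp add: is_walk_iff)
  then have "successively (gadj E) (take (Suc k) ps)"
    using successively_append_iff by blast
  moreover have "last (take (Suc k) ps) = ps ! k"
    using k by (simp add: take_Suc_conv_app_nth)
  ultimately show ?thesis
    using walk by (auto simp: is_walk_iff)
qed

lemma is_walk_drop:
  assumes walk: "is_walk E ps u v" and k: "k < length ps"
  shows "is_walk E (drop k ps) (ps ! k) v"
proof -
  have "successively (gadj E) (take k ps @ drop k ps)"
    using walk by (simp add: is_walk_iff)
  then have "successively (gadj E) (drop k ps)"
    using successively_append_iff by blast
  then show ?thesis
    using walk k by (auto simp: is_walk_iff hd_drop_conv_nth)
qed

lemma is_walk_append:
  assumes "is_walk E ps u v" "is_walk E qs v w"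
  shows "is_walk E (ps @ tl qs) u w"
proof -
  obtain qs' where qs: "qs = v # qs'"
    using assms(2) by (cases qs) (auto simp: is_walk_iff)
  show ?thesis
    using assms unfolding qs
    by (cases qs') (auto simp: is_walk_iff successively_append_iff)
qed

lemma is_walk_nth_isl:
  assumes walk: "is_walk E ps (Inl i) v" and k: "k < length ps"
  shows "isl (ps ! k) \<longleftrightarrow> even k"
  using k
proof (induction k)
  case 0
  then show ?case using walk by (auto simp: is_walk_def hd_conv_nth)
next
  case (Suc k)
  then have "gadj E (ps ! k) (ps ! Suc k)" using walk unfolding is_walk_def by blast
  then show ?case using Suc gadj_isl by fastforce
qed

lemma is_walk_length_parity:
  assumes walk: "is_walk E ps (Inl i) v"
  shows "isl v \<longleftrightarrow> odd (length ps)"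
proof -
  have ne: "ps \<noteq> []" and "last ps = v" using walk unfolding is_walk_def by auto
  then have "ps ! (length ps - 1) = v" by (simp add: last_conv_nth)
  with is_walk_nth_isl[OF walk, of "length ps - 1"] ne show ?thesis by (cases "length ps") auto
qed

lemma is_walk_nth_edge:
  assumes walk: "is_walk E ps (Inl i) v" and a: "a < length ps" "even a" and b: "b < length ps" "odd b"
    and adjacent: "a = Suc b \<or> b = Suc a"
  shows "E (cls (ps ! a)) (pool (ps ! b))"
proof -
  have "isl (ps ! a)" "\<not> isl (ps ! b)" using is_walk_nth_isl[OF walk] a b by auto
  then obtain x y where "ps ! a = Inl x" "ps ! b = Inr y" by (cases "ps ! a"; cases "ps ! b") auto
  moreover have "gadj E (ps ! a) (ps ! b) \<or> gadj E (ps ! b) (ps ! a)"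
    using walk adjacent a b unfolding is_walk_def by auto
  ultimately show ?thesis by auto
qed

section \<open>Shortest walks in a tree\<close>

definition shortest_walk :: "('i \<Rightarrow> 'j \<Rightarrow> bool) \<Rightarrow> ('i + 'j) list \<Rightarrow> ('i + 'j) \<Rightarrow> ('i + 'j) \<Rightarrow> bool" where
  "shortest_walk E ps u v \<longleftrightarrow> is_walk E ps u v \<and> (\<forall>qs. is_walk E qs u v \<longrightarrow> length ps \<le> length qs)"

lemma shortest_walk_exists:
  assumes "is_walk E ps u v"
  shows "\<exists>ps. shortest_walk E ps u v"
  using ex_has_least_nat[of "\<lambda>ps. is_walk E ps u v" ps length] assms
  unfolding shortest_walk_def by blast

lemma shortest_walk_length_eq:
  "shortest_walk E P u v \<Longrightarrow> shortest_walk E Q u v \<Longrightarrow> length P = length Q"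
  unfolding shortest_walk_def by (meson antisym)

lemma shortest_walk_take:
  assumes P: "shortest_walk E P u v" and k: "k < length P"
  shows "shortest_walk E (take (Suc k) P) u (P ! k)"
proof -
  have walk: "is_walk E P u v" using P unfolding shortest_walk_def by blast
  have "Suc k \<le> length qs" if q: "is_walk E qs u (P ! k)" for qs
  proof (rule ccontr)
    assume "\<not> Suc k \<le> length qs"
    moreover have "is_walk E (qs @ tl (drop k P)) u v"
      using is_walk_append[OF q is_walk_drop[OF walk k]] .
    ultimately show False using P k unfolding shortest_walk_def by fastforce
  qed
  then show ?thesis using is_walk_take[OF walk k] k unfolding shortest_walk_def by simp
qed

text \<open>On shortest walks from a common start, the position of a vertex is its distance from the start.\<close>

lemma shortest_walks_nth_eq_imp_eq:
  assumes P: "shortest_walk E P u v" and Q: "shortest_walk E Q u v'"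
    and a: "a < length P" and b: "b < length Q" and eq: "P ! a = Q ! b"
  shows "a = b"
proof -
  have "shortest_walk E (take (Suc b) Q) u (P ! a)" using shortest_walk_take[OF Q b] eq by simp
  then have "length (take (Suc a) P) = length (take (Suc b) Q)"
    by (rule shortest_walk_length_eq[OF shortest_walk_take[OF P a]])
  then show ?thesis using a b by simp
qed

lemma successively_upt:
  assumes "\<And>k. a \<le> k \<Longrightarrow> Suc k < b \<Longrightarrow> R k (Suc k)"
  shows "successively R [a..<b]"
  unfolding successively_conv_nth
proof (intro allI impI)
  fix i assume "Suc i < length [a..<b]"
  then show "R ([a..<b] ! i) ([a..<b] ! Suc i)" using assms[of "a + i"] by simp
qed

lemma shortest_walks_fork_cycle:
  assumes P: "shortest_walk E P u v" and Q: "shortest_walk E Q u v"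
    and m: "0 < m" "m < t" and t: "t < length P"
    and fork: "P ! (m - 1) = Q ! (m - 1)" and join: "P ! t = Q ! t"
    and apart: "\<And>k. m \<le> k \<Longrightarrow> k < t \<Longrightarrow> P ! k \<noteq> Q ! k"
  shows "is_cycle E (map (nth P) [m - 1..<Suc t] @ rev (map (nth Q) [m..<t]))"
    (is "is_cycle E (?Ps @ ?Qs)")
proof -
  have tQ: "t < length Q" using t shortest_walk_length_eq[OF P Q] by simp
  have adjP: "gadj E (P ! k) (P ! Suc k)" if "Suc k < length P" for k
    using P that unfolding shortest_walk_def is_walk_def by blast
  have adjQ: "gadj E (Q ! k) (Q ! Suc k)" if "Suc k < length Q" for k
    using Q that unfolding shortest_walk_def is_walk_def by blast
  have injP: "inj_on (nth P) {..<length P}"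
    using shortest_walks_nth_eq_imp_eq[OF P P] by (auto simp: inj_on_def)
  have injQ: "inj_on (nth Q) {..<length Q}"
    using shortest_walks_nth_eq_imp_eq[OF Q Q] by (auto simp: inj_on_def)
  have disjoint: "P ! a \<noteq> Q ! b" if "m - 1 \<le> a" "a < Suc t" "m \<le> b" "b < t" for a b
  proof
    assume eq: "P ! a = Q ! b"
    then have "a = b" using shortest_walks_nth_eq_imp_eq[OF P Q] that t tQ by simp
    then show False using eq apart that by simp
  qed
  have "distinct (?Ps @ ?Qs)"
    using m t tQ disjoint
    by (auto simp: distinct_map intro: inj_on_subset[OF injP] inj_on_subset[OF injQ])
  moreover have "successively (gadj E) ?Ps"
    unfolding successively_map by (rule successively_upt) (use t adjP in auto)
  moreover have "successively (gadj E) ?Qs"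
    unfolding successively_rev successively_map
    by (rule successively_upt) (use tQ adjQ gadj_commute in fastforce)
  moreover have "last ?Ps = P ! t" and "hd ?Qs = Q ! (t - 1)"
    using m by (cases t; auto simp: hd_rev)+
  moreover have "gadj E (P ! t) (Q ! (t - 1))"
    using adjQ[of "t - 1"] m tQ join by (simp add: gadj_commute)
  moreover have "last (?Ps @ ?Qs) = Q ! m" and "hd (?Ps @ ?Qs) = Q ! (m - 1)"
    using m fork by (auto simp: last_rev upt_conv_Cons)
  moreover have "gadj E (Q ! m) (Q ! (m - 1))"
    using adjQ[of "m - 1"] m tQ by (simp add: gadj_commute)
  moreover have "3 \<le> length (?Ps @ ?Qs)" using m by simp linarith
  ultimately show ?thesis
    unfolding is_cycle_def successively_conv_nth[symmetric]
    by (simp add: successively_append_iff)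
qed

lemma shortest_walk_unique:
  assumes tree: "is_tree E" and P: "shortest_walk E P u v" and Q: "shortest_walk E Q u v"
  shows "P = Q"
proof (rule ccontr)
  assume "P \<noteq> Q"
  define n where "n = length P"
  have nQ: "length Q = n" using shortest_walk_length_eq[OF P Q] n_def by simp
  have "is_walk E P u v" "is_walk E Q u v" using P Q unfolding shortest_walk_def by auto
  then have "P \<noteq> []" "Q \<noteq> []" "hd P = hd Q" "last P = last Q" unfolding is_walk_def by auto
  then have first: "P ! 0 = Q ! 0" and last: "P ! (n - 1) = Q ! (n - 1)"
    using nQ n_def by (auto simp: hd_conv_nth last_conv_nth)
  have "\<exists>k. k < n \<and> P ! k \<noteq> Q ! k"
  proof (rule ccontr)
    assume "\<not> ?thesis"
    then have "P = Q" using nQ n_def by (intro nth_equalityI) auto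
    with \<open>P \<noteq> Q\<close> show False ..
  qed
  then obtain m where m: "m < n" "P ! m \<noteq> Q ! m" and before: "\<forall>k<m. \<not> (k < n \<and> P ! k \<noteq> Q ! k)"
    unfolding exists_least_iff[of "\<lambda>k. k < n \<and> P ! k \<noteq> Q ! k"] by blast
  have "0 < m" using m first by (cases m) auto
  have "m \<noteq> n - 1" using m last by auto
  then have "\<exists>t. m < t \<and> t < n \<and> P ! t = Q ! t" using m last by (intro exI[of _ "n - 1"]) auto
  then obtain t where t: "m < t" "t < n" "P ! t = Q ! t"
    and between: "\<forall>k<t. \<not> (m < k \<and> k < n \<and> P ! k = Q ! k)"
    unfolding exists_least_iff[of "\<lambda>k. m < k \<and> k < n \<and> P ! k = Q ! k"] by blast
  have "is_cycle E (map (nth P) [m - 1..<Suc t] @ rev (map (nth Q) [m..<t]))"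
  proof (rule shortest_walks_fork_cycle[OF P Q \<open>0 < m\<close> t(1)])
    show "t < length P" "P ! t = Q ! t" using t n_def by simp_all
    show "P ! (m - 1) = Q ! (m - 1)" using before m \<open>0 < m\<close> by simp
    show "P ! k \<noteq> Q ! k" if "m \<le> k" "k < t" for k
      using that m t between by (cases "k = m") auto
  qed
  then show False using tree unfolding is_tree_def by blast
qed

lemma shortest_path_shortest_walk:
  assumes tree: "is_tree E"
  shows "shortest_walk E (shortest_path E u v) u v"
proof -
  obtain ps where "is_walk E ps u v"
    using tree rtranclp_gadj_imp_walk unfolding is_tree_def by blast
  then obtain P where P: "shortest_walk E P u v" using shortest_walk_exists by blast
  have "shortest_path E u v = P"
    unfolding shortest_path_def shortest_walk_def[symmetric]
    using P shortest_walk_unique[OF tree _ P] by blast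
  with P show ?thesis by simp
qed

lemma shortest_path_eqI:
  "is_tree E \<Longrightarrow> shortest_walk E P u v \<Longrightarrow> shortest_path E u v = P"
  using shortest_walk_unique shortest_path_shortest_walk by blast

lemma shortest_path_refl: "is_tree E \<Longrightarrow> shortest_path E u u = [u]"
  by (rule shortest_path_eqI) (auto simp: shortest_walk_def is_walk_def Suc_le_eq)

text \<open>Minimality keeps the two path lengths within one of each other, and parity rules out equality.\<close>

lemma shortest_path_edge_cases:
  assumes tree: "is_tree E" and e: "E l j"
  shows "shortest_path E (Inl i) (Inr j) = shortest_path E (Inl i) (Inl l) @ [Inr j] \<or>
         shortest_path E (Inl i) (Inl l) = shortest_path E (Inl i) (Inr j) @ [Inl l]"
proof -
  define Pl where "Pl = shortest_path E (Inl i) (Inl l)"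
  define Pj where "Pj = shortest_path E (Inl i) (Inr j)"
  have ml: "shortest_walk E Pl (Inl i) (Inl l)" and mj: "shortest_walk E Pj (Inl i) (Inr j)"
    using shortest_path_shortest_walk[OF tree] Pl_def Pj_def by simp_all
  then have wl: "is_walk E Pl (Inl i) (Inl l)" and wj: "is_walk E Pj (Inl i) (Inr j)"
    unfolding shortest_walk_def by auto
  have wl': "is_walk E (Pl @ [Inr j]) (Inl i) (Inr j)" using is_walk_snoc[OF wl] e by simp
  have wj': "is_walk E (Pj @ [Inl l]) (Inl i) (Inl l)" using is_walk_snoc[OF wj] e by simp
  have "length Pj \<le> length Pl + 1" "length Pl \<le> length Pj + 1"
    using ml mj wl' wj' unfolding shortest_walk_def by fastforce+
  moreover have "odd (length Pl)" "even (length Pj)"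
    using is_walk_length_parity[OF wl] is_walk_length_parity[OF wj] by simp_all
  ultimately have "length Pj = length Pl + 1 \<or> length Pl = length Pj + 1" by presburger
  then show ?thesis
  proof
    assume "length Pj = length Pl + 1"
    then have "shortest_walk E (Pl @ [Inr j]) (Inl i) (Inr j)"
      using wl' mj unfolding shortest_walk_def by auto
    then show ?thesis using shortest_path_eqI[OF tree] Pj_def Pl_def by simp
  next
    assume "length Pl = length Pj + 1"
    then have "shortest_walk E (Pj @ [Inl l]) (Inl i) (Inl l)"
      using wj' ml unfolding shortest_walk_def by auto
    then show ?thesis using shortest_path_eqI[OF tree] Pj_def Pl_def by simp
  qed
qed

section \<open>Gains\<close>

text \<open>Along a walk q starting at a class, the k-th class is i_k = cls (q ! (2 * (k - 1))) and the
  k-th pool is j_k = pool (q ! (2 * k - 1)); so mu_fwd mu q k is mu i_k j_k and mu_bwd mu q k is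
  mu i_(k+1) j_k, the two kinds of factors in the gains.\<close>

definition mu_fwd :: "('i \<Rightarrow> 'j \<Rightarrow> real) \<Rightarrow> ('i + 'j) list \<Rightarrow> nat \<Rightarrow> real" where
  "mu_fwd mu q k = mu (cls (q ! (2 * (k - 1)))) (pool (q ! (2 * k - 1)))"

definition mu_bwd :: "('i \<Rightarrow> 'j \<Rightarrow> real) \<Rightarrow> ('i + 'j) list \<Rightarrow> nat \<Rightarrow> real" where
  "mu_bwd mu q k = mu (cls (q ! (2 * k))) (pool (q ! (2 * k - 1)))"

definition walk_gain_cp :: "('i \<Rightarrow> 'j \<Rightarrow> real) \<Rightarrow> ('i + 'j) list \<Rightarrow> real" where
  "walk_gain_cp mu q = mu_fwd mu q 1 * (\<Prod>k\<in>{1..length q div 2 - 1}. mu_fwd mu q (k + 1) / mu_bwd mu q k)"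

definition walk_gain_cc :: "('i \<Rightarrow> 'j \<Rightarrow> real) \<Rightarrow> ('i + 'j) list \<Rightarrow> real" where
  "walk_gain_cc mu q = (\<Prod>k\<in>{1..(length q + 1) div 2 - 1}. mu_fwd mu q k / mu_bwd mu q k)"

lemma gain_cp_eq_walk_gain_cp: "gain_cp E mu i j = walk_gain_cp mu (shortest_path E (Inl i) (Inr j))"
  by (simp add: gain_cp_def walk_gain_cp_def mu_fwd_def mu_bwd_def Let_def)

lemma gain_cc_eq_walk_gain_cc:
  "gain_cc E mu i l = (if i = l then 1 else walk_gain_cc mu (shortest_path E (Inl i) (Inl l)))"
  by (simp add: gain_cc_def walk_gain_cc_def mu_fwd_def mu_bwd_def Let_def)

lemma prod_ratio_shift:
  fixes f g :: "nat \<Rightarrow> 'a::field"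
  shows "f 1 * (\<Prod>k\<in>{1..n}. f (k + 1) / g k) = (\<Prod>k\<in>{1..n}. f k / g k) * f (n + 1)"
proof (induction n)
  case (Suc n)
  have "f 1 * (\<Prod>k\<in>{1..Suc n}. f (k + 1) / g k) = f 1 * (\<Prod>k\<in>{1..n}. f (k + 1) / g k) * (f (n + 2) / g (Suc n))"
    by (simp add: prod.cl_ivl_Suc mult_ac)
  also have "\<dots> = (\<Prod>k\<in>{1..Suc n}. f k / g k) * f (Suc n + 1)"
    using Suc by (simp add: prod.cl_ivl_Suc mult_ac divide_inverse)
  finally show ?case .
qed simp

lemma walk_gain_cp_snoc:
  assumes odd: "odd (length ps)" and last: "ps ! (length ps - 1) = Inl l"
  shows "walk_gain_cp mu (ps @ [Inr j]) = walk_gain_cc mu ps * mu l j"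
proof -
  define q where "q = ps @ [Inr j]"
  from odd obtain m' where "length ps = 2 * m' + 1" by (rule oddE)
  then obtain m where m: "1 \<le> m" "length ps = 2 * m - 1" by (intro that[of "m' + 1"]) auto
  have lengths: "length q div 2 = m" "(length ps + 1) div 2 = m" using m unfolding q_def by auto
  have same: "mu_fwd mu q k = mu_fwd mu ps k" "mu_bwd mu q k = mu_bwd mu ps k" if "k \<in> {1..m - 1}" for k
    using that m unfolding mu_fwd_def mu_bwd_def q_def by (auto simp: nth_append)
  have new: "mu_fwd mu q (m - 1 + 1) = mu l j"
  proof -
    have "2 * (m - 1 + 1 - 1) = length ps - 1" "2 * (m - 1 + 1) - 1 = length ps" using m by auto
    moreover have "q ! (length ps - 1) = Inl l" using last m unfolding q_def by (auto simp: nth_append)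
    ultimately show ?thesis unfolding mu_fwd_def q_def by simp
  qed
  have "walk_gain_cp mu q = (\<Prod>k\<in>{1..m - 1}. mu_fwd mu q k / mu_bwd mu q k) * mu_fwd mu q (m - 1 + 1)"
    unfolding walk_gain_cp_def lengths by (rule prod_ratio_shift)
  also have "(\<Prod>k\<in>{1..m - 1}. mu_fwd mu q k / mu_bwd mu q k) = walk_gain_cc mu ps"
    unfolding walk_gain_cc_def lengths using same by (intro prod.cong) auto
  finally show ?thesis using new unfolding q_def by simp
qed

lemma walk_gain_cc_snoc:
  assumes even: "even (length ps)" and "ps \<noteq> []" and last: "ps ! (length ps - 1) = Inr j"
  shows "walk_gain_cc mu (ps @ [Inl l]) = walk_gain_cp mu ps / mu l j"
proof -
  define q where "q = ps @ [Inl l]"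
  from even obtain m where m2: "length ps = 2 * m" by (rule evenE)
  have "1 \<le> m" using m2 \<open>ps \<noteq> []\<close> by (cases m) auto
  note m = this m2
  have lengths: "(length q + 1) div 2 - 1 = m" "length ps div 2 - 1 = m - 1" using m unfolding q_def by auto
  have same: "mu_fwd mu q k = mu_fwd mu ps k" if "k \<in> {1..m}" for k
    using that m unfolding mu_fwd_def q_def by (auto simp: nth_append)
  have same': "mu_bwd mu q k = mu_bwd mu ps k" if "k \<in> {1..m - 1}" for k
    using that m unfolding mu_bwd_def q_def by (auto simp: nth_append)
  have new: "mu_bwd mu q m = mu l j"
    using last m unfolding mu_bwd_def q_def by (auto simp: nth_append)
  have split: "{1..m} = insert m {1..m - 1}" using m by auto
  have "walk_gain_cc mu q = (\<Prod>k\<in>{1..m - 1}. mu_fwd mu q k / mu_bwd mu q k) * (mu_fwd mu q m / mu_bwd mu q m)"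
    unfolding walk_gain_cc_def lengths split by (subst prod.insert) (auto simp: mult.commute)
  also have "(\<Prod>k\<in>{1..m - 1}. mu_fwd mu q k / mu_bwd mu q k) = (\<Prod>k\<in>{1..m - 1}. mu_fwd mu ps k / mu_bwd mu ps k)"
    using same same' by (intro prod.cong) auto
  also have "mu_fwd mu q m = mu_fwd mu ps m" using same m by simp
  also have "(\<Prod>k\<in>{1..m - 1}. mu_fwd mu ps k / mu_bwd mu ps k) * (mu_fwd mu ps m / mu_bwd mu q m)
      = walk_gain_cp mu ps / mu l j"
    using prod_ratio_shift[of "mu_fwd mu ps" "mu_bwd mu ps" "m - 1"] m
    unfolding walk_gain_cp_def lengths new by simp
  finally show ?thesis unfolding q_def .
qed

lemma gain_cc_mult_mu:
  assumes tree: "is_tree E" and e: "E l j" and mu_l_j: "mu l j \<noteq> 0"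
  shows "gain_cc E mu i l * mu l j = gain_cp E mu i j"
proof -
  define Pl where "Pl = shortest_path E (Inl i) (Inl l)"
  define Pj where "Pj = shortest_path E (Inl i) (Inr j)"
  have wl: "is_walk E Pl (Inl i) (Inl l)" and wj: "is_walk E Pj (Inl i) (Inr j)"
    using shortest_path_shortest_walk[OF tree] unfolding Pl_def Pj_def shortest_walk_def by auto
  have "Pl \<noteq> []" "Pj \<noteq> []" using wl wj unfolding is_walk_def by auto
  then have last_l: "Pl ! (length Pl - 1) = Inl l" and last_j: "Pj ! (length Pj - 1) = Inr j"
    using wl wj unfolding is_walk_def by (auto simp: last_conv_nth)
  have root: "shortest_path E (Inl i) (Inl i) = [Inl i]" using shortest_path_refl[OF tree] .
  from shortest_path_edge_cases[OF tree e, of i]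
  show ?thesis
  proof
    assume Pj: "shortest_path E (Inl i) (Inr j) = shortest_path E (Inl i) (Inl l) @ [Inr j]"
    have "gain_cc E mu i l = walk_gain_cc mu Pl"
      using root by (cases "i = l") (auto simp: gain_cc_eq_walk_gain_cc walk_gain_cc_def Pl_def)
    moreover have "gain_cp E mu i j = walk_gain_cc mu Pl * mu l j"
      unfolding gain_cp_eq_walk_gain_cp Pj Pl_def[symmetric]
      using walk_gain_cp_snoc is_walk_length_parity[OF wl] last_l by simp
    ultimately show ?thesis by simp
  next
    assume Pl: "shortest_path E (Inl i) (Inl l) = shortest_path E (Inl i) (Inr j) @ [Inl l]"
    have "i \<noteq> l"
    proof
      assume "i = l"
      then have "[Inl i] = Pj @ [Inl l]" using Pl root Pj_def by simp
      with \<open>Pj \<noteq> []\<close> show False by (cases Pj) auto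
    qed
    then have "gain_cc E mu i l = walk_gain_cp mu Pj / mu l j"
      unfolding gain_cc_eq_walk_gain_cc Pl Pj_def[symmetric]
      using walk_gain_cc_snoc is_walk_length_parity[OF wj] \<open>Pj \<noteq> []\<close> last_j by simp
    then show ?thesis using mu_l_j unfolding gain_cp_eq_walk_gain_cp Pj_def by simp
  qed
qed

lemma gain_cc_pos:
  assumes tree: "is_tree E" and mu_pos: "\<And>i j. E i j \<Longrightarrow> mu i j > 0"
  shows "gain_cc E mu i l > 0"
proof (cases "i = l")
  case False
  define P where "P = shortest_path E (Inl i) (Inl l)"
  have walk: "is_walk E P (Inl i) (Inl l)"
    using shortest_path_shortest_walk[OF tree] unfolding P_def shortest_walk_def by auto
  have odd: "odd (length P)" using is_walk_length_parity[OF walk] by simp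
  have "mu_fwd mu P k > 0 \<and> mu_bwd mu P k > 0" if "k \<in> {1..(length P + 1) div 2 - 1}" for k
  proof -
    have "2 * k < length P" using that odd by (auto elim!: oddE)
    then show ?thesis
      using that unfolding mu_fwd_def mu_bwd_def
      by (auto intro!: mu_pos is_walk_nth_edge[OF walk])
  qed
  then show ?thesis
    using False by (auto simp: gain_cc_eq_walk_gain_cc walk_gain_cc_def P_def intro!: prod_pos)
qed (simp add: gain_cc_def)

section \<open>The SWSS linear program\<close>

text \<open>The flow map is linear. A vector orthogonal to its range has opposite values at the two
  ends of every edge, hence by connectivity is (a, ..., a, -a, ..., -a), and such vectors are
  orthogonal to every balanced pair (A, B).\<close>

lemma connected_bipartite_flow_exists:
  fixes E :: "'i::finite \<Rightarrow> 'j::finite \<Rightarrow> bool" and A :: "'i \<Rightarrow> real" and B :: "'j \<Rightarrow> real"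
  assumes conn: "\<forall>u v. (gadj E)\<^sup>*\<^sup>* u v"
    and balance: "(\<Sum>l\<in>UNIV. A l) = (\<Sum>j\<in>UNIV. B j)"
  shows "\<exists>y. (\<forall>l. (\<Sum>j\<in>{j. E l j}. y l j) = A l) \<and> (\<forall>j. (\<Sum>l\<in>{l. E l j}. y l j) = B j)"
proof -
  define T :: "real^('i \<times> 'j) \<Rightarrow> (real^'i) \<times> (real^'j)" where
    "T y = (\<chi> l. \<Sum>j\<in>{j. E l j}. y $ (l, j), \<chi> j. \<Sum>l\<in>{l. E l j}. y $ (l, j))" for y
  have "linear T"
    unfolding linear_iff T_def by (auto simp: vec_eq_iff sum.distrib sum_distrib_left)
  then have span: "span (range T) = range T"
    using linear_subspace_image[OF _ subspace_UNIV] by simp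
  define c where "c = ((\<chi> l. A l, \<chi> j. B j) :: (real^'i) \<times> (real^'j))"
  obtain w z where w: "w \<in> span (range T)" and z: "\<And>x. x \<in> span (range T) \<Longrightarrow> orthogonal z x"
    and c: "c = w + z"
    using orthogonal_subspace_decomp_exists[of "range T" c] by blast
  obtain z1 z2 where zz: "z = (z1, z2)" by (cases z)
  have edge: "z1 $ l + z2 $ j = 0" if "E l j" for l j
  proof -
    define y :: "real^('i \<times> 'j)" where "y = (\<chi> e. if e = (l, j) then 1 else 0)"
    have "T y = (\<chi> l'. if l' = l then 1 else 0, \<chi> j'. if j' = j then 1 else 0)"
      using that by (auto simp: T_def y_def vec_eq_iff)
    moreover have "orthogonal z (T y)" using z span by auto
    ultimately show ?thesis
      by (simp add: zz orthogonal_def inner_vec_def if_distrib cong: if_cong)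
  qed
  define psi where "psi v = (case v of Inl l \<Rightarrow> z1 $ l | Inr j \<Rightarrow> - z2 $ j)" for v
  have "psi x = psi y" if "gadj E x y" for x y
    using that edge by (cases x; cases y) (auto simp: psi_def add_eq_0_iff)
  then have psi_const: "psi u = psi (Inl undefined)" for u
    using conn rtranclp_gadj_invariant by metis
  define a where "a = psi (Inl undefined)"
  have "z1 $ l = a" "z2 $ j = - a" for l j
    using psi_const[of "Inl l"] psi_const[of "Inr j"] by (simp_all add: a_def psi_def)
  then have "inner z c = a * (\<Sum>l\<in>UNIV. A l) - a * (\<Sum>j\<in>UNIV. B j)"
    by (simp add: zz c_def inner_vec_def sum_distrib_left sum_negf)
  then have "inner z c = 0" using balance by simp
  moreover have "inner z w = 0" using z[OF w] by (simp add: orthogonal_def)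
  ultimately have "z = 0" using c by (simp add: inner_add_right)
  then obtain y where "T y = c" using c w span by auto
  then show ?thesis
    by (intro exI[of _ "\<lambda>l j. y $ (l, j)"]) (auto simp: T_def c_def vec_eq_iff)
qed

lemma sum_edges_swap:
  fixes E :: "'i::finite \<Rightarrow> 'j::finite \<Rightarrow> bool" and f :: "'i \<Rightarrow> 'j \<Rightarrow> 'a::comm_monoid_add"
  shows "(\<Sum>l\<in>UNIV. \<Sum>j\<in>{j. E l j}. f l j) = (\<Sum>j\<in>UNIV. \<Sum>l\<in>{l. E l j}. f l j)"
proof -
  have "(\<Sum>l\<in>UNIV. \<Sum>j\<in>{j. E l j}. f l j) = (\<Sum>l\<in>UNIV. \<Sum>j\<in>UNIV. if E l j then f l j else 0)"
    by (simp add: sum.If_cases Collect_conj_eq[symmetric])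
  also have "\<dots> = (\<Sum>j\<in>UNIV. \<Sum>l\<in>UNIV. if E l j then f l j else 0)" by (rule sum.swap)
  also have "\<dots> = (\<Sum>j\<in>UNIV. \<Sum>l\<in>{l. E l j}. f l j)"
    by (simp add: sum.If_cases Collect_conj_eq[symmetric])
  finally show ?thesis .
qed

lemma swss_feasible_weighted_bound:
  fixes E :: "'i::finite \<Rightarrow> 'j::finite \<Rightarrow> bool"
  assumes feasible: "swss_feasible E mu lamhat theta p vt kappa"
    and d_nonneg: "\<And>l. 0 \<le> d l" and potential: "\<And>l j. E l j \<Longrightarrow> d l * mu l j = e j"
  shows "vt * (\<Sum>l\<in>UNIV. d l * p l) \<le> (\<Sum>j\<in>UNIV. e j * theta j) - (\<Sum>l\<in>UNIV. d l * lamhat l)"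
proof -
  have class_le: "lamhat l \<le> (\<Sum>j\<in>{j. E l j}. mu l j * kappa l j) - vt * p l" for l
    using feasible unfolding swss_feasible_def by blast
  have pool_eq: "(\<Sum>l\<in>{l. E l j}. kappa l j) = theta j" for j
    using feasible unfolding swss_feasible_def by blast
  have "(\<Sum>l\<in>UNIV. d l * lamhat l) \<le> (\<Sum>l\<in>UNIV. d l * ((\<Sum>j\<in>{j. E l j}. mu l j * kappa l j) - vt * p l))"
    using class_le d_nonneg by (intro sum_mono mult_left_mono) auto
  also have "\<dots> = (\<Sum>l\<in>UNIV. (\<Sum>j\<in>{j. E l j}. d l * mu l j * kappa l j) - vt * (d l * p l))"
    by (simp add: right_diff_distrib sum_distrib_left mult.assoc mult.left_commute)
  also have "\<dots> = (\<Sum>l\<in>UNIV. \<Sum>j\<in>{j. E l j}. d l * mu l j * kappa l j) - vt * (\<Sum>l\<in>UNIV. d l * p l)"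
    by (simp add: sum_subtractf sum_distrib_left)
  also have "(\<Sum>l\<in>UNIV. \<Sum>j\<in>{j. E l j}. d l * mu l j * kappa l j) = (\<Sum>l\<in>UNIV. \<Sum>j\<in>{j. E l j}. e j * kappa l j)"
    using potential by (intro sum.cong) auto
  also have "\<dots> = (\<Sum>j\<in>UNIV. \<Sum>l\<in>{l. E l j}. e j * kappa l j)"
    by (rule sum_edges_swap)
  also have "\<dots> = (\<Sum>j\<in>UNIV. e j * theta j)"
    by (simp add: pool_eq sum_distrib_left[symmetric])
  finally show ?thesis by simp
qed

lemma swss_feasible_exists:
  fixes E :: "'i::finite \<Rightarrow> 'j::finite \<Rightarrow> bool"
  assumes conn: "\<forall>u v. (gadj E)\<^sup>*\<^sup>* u v"
    and d_pos: "\<And>l. 0 < d l" and potential: "\<And>l j. E l j \<Longrightarrow> d l * mu l j = e j"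
    and mu_nonzero: "\<And>l j. E l j \<Longrightarrow> mu l j \<noteq> 0"
    and balance: "vt * (\<Sum>l\<in>UNIV. d l * p l) = (\<Sum>j\<in>UNIV. e j * theta j) - (\<Sum>l\<in>UNIV. d l * lamhat l)"
  shows "\<exists>kappa. swss_feasible E mu lamhat theta p vt kappa"
proof -
  have "(\<Sum>l\<in>UNIV. d l * (lamhat l + vt * p l)) = (\<Sum>j\<in>UNIV. e j * theta j)"
    using balance by (simp add: distrib_left sum.distrib sum_distrib_left mult_ac)
  then obtain y where y_class: "\<And>l. (\<Sum>j\<in>{j. E l j}. y l j) = d l * (lamhat l + vt * p l)"
    and y_pool: "\<And>j. (\<Sum>l\<in>{l. E l j}. y l j) = e j * theta j"
    using connected_bipartite_flow_exists[OF conn] by blast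
  have e_nonzero: "e j \<noteq> 0" if "E l j" for l j
    using potential[OF that] d_pos[of l] mu_nonzero[OF that] by force
  define kappa where "kappa l j = (if E l j then y l j / e j else 0)" for l j
  have "mu l j * kappa l j = y l j / d l" if "E l j" for l j
    using potential[OF that, symmetric] d_pos[of l] mu_nonzero[OF that] that by (simp add: kappa_def)
  then have "(\<Sum>j\<in>{j. E l j}. mu l j * kappa l j) = (\<Sum>j\<in>{j. E l j}. y l j / d l)" for l
    by (intro sum.cong) auto
  then have "(\<Sum>j\<in>{j. E l j}. mu l j * kappa l j) = lamhat l + vt * p l" for l
    using y_class[of l] d_pos[of l] by (simp add: sum_divide_distrib[symmetric])
  moreover have "(\<Sum>l\<in>{l. E l j}. kappa l j) = theta j" for j
  proof -
    obtain l0 where "E l0 j" using connected_pool_has_class[OF conn] by blast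
    have "(\<Sum>l\<in>{l. E l j}. kappa l j) = (\<Sum>l\<in>{l. E l j}. y l j) / e j"
      by (simp add: kappa_def sum_divide_distrib)
    then show ?thesis using y_pool[of j] e_nonzero[OF \<open>E l0 j\<close>] by simp
  qed
  ultimately have "swss_feasible E mu lamhat theta p vt kappa"
    unfolding swss_feasible_def in_RG_def kappa_def by auto
  then show ?thesis by blast
qed

lemma swss_eq_by_potential:
  fixes E :: "'i::finite \<Rightarrow> 'j::finite \<Rightarrow> bool"
  assumes conn: "\<forall>u v. (gadj E)\<^sup>*\<^sup>* u v"
    and d_pos: "\<And>l. 0 < d l" and potential: "\<And>l j. E l j \<Longrightarrow> d l * mu l j = e j"
    and mu_nonzero: "\<And>l j. E l j \<Longrightarrow> mu l j \<noteq> 0" and p_pos: "\<And>l. 0 < p l"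
  shows "swss E mu lamhat theta p
    = ((\<Sum>j\<in>UNIV. e j * theta j) - (\<Sum>l\<in>UNIV. d l * lamhat l)) / (\<Sum>l\<in>UNIV. d l * p l)"
    (is "_ = ?value")
  unfolding swss_def
proof (rule Greatest_equality)
  have D_pos: "0 < (\<Sum>l\<in>UNIV. d l * p l)" using d_pos p_pos by (intro sum_pos) auto
  then show "\<exists>kappa. swss_feasible E mu lamhat theta p ?value kappa"
    by (intro swss_feasible_exists[OF conn d_pos potential mu_nonzero]) auto
  fix vt assume "\<exists>kappa. swss_feasible E mu lamhat theta p vt kappa"
  then obtain kappa where "swss_feasible E mu lamhat theta p vt kappa" ..
  from swss_feasible_weighted_bound[OF this less_imp_le[OF d_pos] potential]
  show "vt \<le> ?value" using D_pos by (simp add: pos_le_divide_eq)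
qed

theorem theorem2:
  fixes E :: "'i::finite \<Rightarrow> 'j::finite \<Rightarrow> bool"
    and lamn :: "nat \<Rightarrow> 'i \<Rightarrow> real" and mun :: "nat \<Rightarrow> 'i \<Rightarrow> 'j \<Rightarrow> real" and Nn :: "nat \<Rightarrow> 'j \<Rightarrow> nat"
    and lam :: "'i \<Rightarrow> real" and nu :: "'j \<Rightarrow> real" and mu :: "'i \<Rightarrow> 'j \<Rightarrow> real"
    and lamhat :: "'i \<Rightarrow> real" and muhat :: "'i \<Rightarrow> 'j \<Rightarrow> real" and nuhat :: "'j \<Rightarrow> real"
    and xistar :: "'i \<Rightarrow> 'j \<Rightarrow> real"
    and p :: "'i \<Rightarrow> real"
  assumes tree: "is_tree E"
    and lamn_pos: "\<And>n i. lamn n i > 0"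
    and mun_pos: "\<And>n i j. E i j \<Longrightarrow> mun n i j > 0"
    and lam_pos: "\<And>i. lam i > 0" and nu_pos: "\<And>j. nu j > 0"
    and mu_pos: "\<And>i j. E i j \<Longrightarrow> mu i j > 0"
    and lam_lim: "\<And>i. (\<lambda>n. lamn n i / real n) \<longlonglongrightarrow> lam i"
    and N_lim: "\<And>j. (\<lambda>n. real (Nn n j) / real n) \<longlonglongrightarrow> nu j"
    and mu_lim: "\<And>i j. E i j \<Longrightarrow> (\<lambda>n. mun n i j) \<longlonglongrightarrow> mu i j"
    and lamhat_lim: "\<And>i. (\<lambda>n. (lamn n i - real n * lam i) / sqrt (real n)) \<longlonglongrightarrow> lamhat i"
    and muhat_lim: "\<And>i j. E i j \<Longrightarrow> (\<lambda>n. sqrt (real n) * (mun n i j - mu i j)) \<longlonglongrightarrow> muhat i j"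
    and nuhat_lim: "\<And>j. (\<lambda>n. sqrt (real n) * (real (Nn n j) / real n - nu j)) \<longlonglongrightarrow> nuhat j"
    and crp_opt: "crp_optimal E mu nu lam xistar"
    and crp_unique: "\<And>xi. crp_optimal E mu nu lam xi \<Longrightarrow> xi = xistar"
    and crp_sum: "\<And>j. (\<Sum>i\<in>UNIV. xistar i j) = 1"
    and crp_pos: "\<And>i j. E i j \<Longrightarrow> xistar i j > 0"
    and p_pos: "\<And>i. p i > 0"
    and p_sum: "(\<Sum>i\<in>UNIV. p i) = 1"
  shows "\<forall>i. swss E mu lamhat
              (\<lambda>j. nuhat j + (\<Sum>i'\<in>{i'. E i' j}. (muhat i' j / mu i' j) * (xistar i' j * nu j))) p
           = ((\<Sum>j\<in>UNIV. gain_cp E mu i j *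
                 (nuhat j + (\<Sum>i'\<in>{i'. E i' j}. (muhat i' j / mu i' j) * (xistar i' j * nu j))))
              - (\<Sum>l\<in>UNIV. gain_cc E mu i l * lamhat l))
             / (\<Sum>l\<in>UNIV. gain_cc E mu i l * p l)"
proof -
  have conn: "\<forall>u v. (gadj E)\<^sup>*\<^sup>* u v" using tree unfolding is_tree_def by blast
  have mu_nonzero: "\<And>l j. E l j \<Longrightarrow> mu l j \<noteq> 0" using mu_pos by fastforce
  have "swss E mu lamhat theta p = ((\<Sum>j\<in>UNIV. gain_cp E mu i j * theta j)
      - (\<Sum>l\<in>UNIV. gain_cc E mu i l * lamhat l)) / (\<Sum>l\<in>UNIV. gain_cc E mu i l * p l)" for i theta
    using gain_cc_pos[OF tree mu_pos] gain_cc_mult_mu[OF tree _ mu_nonzero] mu_nonzero p_pos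
    by (intro swss_eq_by_potential[OF conn]) auto
  then show ?thesis by simp
qed

end
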